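(* Let $n\ge3$ and let $C_n$ be the cycle on $n$ vertices. There exist pairs of vertices $\{a,b\}\neq\{c,d\}$ of $C_n$, at least one of which is an edge, such that there is perfect plus state transfer between $e_a+e_b$ and $e_c+e_d$ in $C_n$, if and only if $n=4$.
   Context: For a graph with adjacency matrix $A$ and degree matrix $\Delta$, the unsigned Laplacian is $L_+=\Delta+A$. Perfect plus state transfer between $e_a+e_b$ and $e_c+e_d$ means $\exp(itL_+)(e_a+e_b)=\gamma(e_c+e_d)$ for some $t\ge0$ and $\gamma\in\mathbb{C}$, $|\gamma|=1$, where $e_v$ is the standard basis vector of $v$. *)

theory Defs
  imports Complex_Main
begin

text \<open>Graphs on the vertex set {0..<n}; matrices and vectors are functions on indices,
  only entries with indices < n are meaningful.\<close>

definition cycle_adj :: "nat \<Rightarrow> nat \<Rightarrow> nat \<Rightarrow> bool" where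
  "cycle_adj n u v \<longleftrightarrow> u < n \<and> v < n \<and> (v = (u + 1) mod n \<or> u = (v + 1) mod n)"

definition degree :: "nat \<Rightarrow> (nat \<Rightarrow> nat \<Rightarrow> bool) \<Rightarrow> nat \<Rightarrow> nat" where
  "degree n adj u = card {v. v < n \<and> adj u v}"

definition signless_laplacian :: "nat \<Rightarrow> (nat \<Rightarrow> nat \<Rightarrow> bool) \<Rightarrow> nat \<Rightarrow> nat \<Rightarrow> complex" where
  "signless_laplacian n adj u v =
     (if u = v then of_nat (degree n adj u) else 0) + (if adj u v then 1 else 0)"

definition mat_mult :: "nat \<Rightarrow> (nat \<Rightarrow> nat \<Rightarrow> complex) \<Rightarrow> (nat \<Rightarrow> nat \<Rightarrow> complex) \<Rightarrow> nat \<Rightarrow> nat \<Rightarrow> complex" where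
  "mat_mult n A B i j = (\<Sum>k<n. A i k * B k j)"

fun mat_pow :: "nat \<Rightarrow> (nat \<Rightarrow> nat \<Rightarrow> complex) \<Rightarrow> nat \<Rightarrow> nat \<Rightarrow> nat \<Rightarrow> complex" where
  "mat_pow n A 0 = (\<lambda>i j. if i = j then 1 else 0)"
| "mat_pow n A (Suc k) = mat_mult n (mat_pow n A k) A"

definition mat_exp :: "nat \<Rightarrow> (nat \<Rightarrow> nat \<Rightarrow> complex) \<Rightarrow> nat \<Rightarrow> nat \<Rightarrow> complex" where
  "mat_exp n A i j = (\<Sum>k. mat_pow n A k i j / of_nat (fact k))"

definition mat_vec :: "nat \<Rightarrow> (nat \<Rightarrow> nat \<Rightarrow> complex) \<Rightarrow> (nat \<Rightarrow> complex) \<Rightarrow> nat \<Rightarrow> complex" where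
  "mat_vec n A x i = (\<Sum>k<n. A i k * x k)"

definition std_basis :: "nat \<Rightarrow> nat \<Rightarrow> complex" where
  "std_basis a v = (if v = a then 1 else 0)"

definition plus_PST :: "nat \<Rightarrow> (nat \<Rightarrow> nat \<Rightarrow> bool) \<Rightarrow> nat \<Rightarrow> nat \<Rightarrow> nat \<Rightarrow> nat \<Rightarrow> bool" where
  "plus_PST n adj a b c d \<longleftrightarrow>
     (\<exists>t::real. \<exists>\<gamma>::complex. t \<ge> 0 \<and> cmod \<gamma> = 1 \<and>
        (\<forall>v<n. mat_vec n (mat_exp n (\<lambda>i j. \<i> * of_real t * signless_laplacian n adj i j))
                   (\<lambda>w. std_basis a w + std_basis b w) v
               = \<gamma> * (std_basis c v + std_basis d v)))"

end

theory Submission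
  imports Defs
begin

(* For every n-th root of unity zeta = omega^j (omega = exp(2 pi i / n)), the
   character v |-> zeta^v is a left eigenvector of the signless Laplacian of C_n with eigenvalue
   lambda_j = 2 + 2 cos(2 pi j / n), hence of exp(i t L) with eigenvalue exp(i t lambda_j).
   Pairing it with the transfer equation gives, for all j,
     exp(i t lambda_j) (zeta^a + zeta^b) = gamma (zeta^c + zeta^d).
   For j = 1 the moduli |omega^a + omega^b| = |omega^c + omega^d| show that both pairs are edges,
   {u, u+1} and {u', u'+1}.  The equations for j = 1 and j = n - 1 then force
   omega^u' = -omega^u, hence exp(i t lambda_j) = (-1)^j gamma whenever 1 + omega^j ~= 0.
   For n ~= 4 this holds for j = 0, 1, 2, which makes 2 + 2 cos(2 pi / n) a quotient of an even
   by an odd integer.  But a rational value of 2 cos(2 pi / n) is an integer (Lucas sequences),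
   i.e. +-1, and then 2 + 2 cos(2 pi / n) is odd.  For n = 4, time pi/2 transfers e_0 + e_1
   to e_2 + e_3. *)

section \<open>Matrix exponential and eigenvectors\<close>

lemma mat_pow_norm_le:
  assumes "j < n"
  shows "norm (mat_pow n A k i j) \<le> (\<Sum>l<n. \<Sum>m<n. norm (A l m)) ^ k"
  using assms
proof (induction k arbitrary: j)
  case 0
  then show ?case by simp
next
  case (Suc k)
  define S where "S = (\<Sum>l<n. \<Sum>m<n. norm (A l m))"
  have "norm (mat_pow n A (Suc k) i j) \<le> (\<Sum>l<n. norm (mat_pow n A k i l) * norm (A l j))"
    unfolding mat_pow.simps mat_mult_def by (rule order_trans[OF norm_sum]) (simp add: norm_mult)
  also have "\<dots> \<le> (\<Sum>l<n. S ^ k * norm (A l j))"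
    using Suc.IH unfolding S_def by (intro sum_mono mult_right_mono) auto
  also have "\<dots> = S ^ k * (\<Sum>l<n. norm (A l j))"
    by (simp add: sum_distrib_left)
  also have "\<dots> \<le> S ^ k * S"
    unfolding S_def using Suc.prems
    by (intro mult_left_mono sum_mono member_le_sum zero_le_power sum_nonneg) auto
  finally show ?case by (simp add: S_def mult.commute)
qed

lemma mat_exp_sums:
  assumes "j < n"
  shows "(\<lambda>k. mat_pow n A k i j / of_nat (fact k)) sums mat_exp n A i j"
proof -
  define S where "S = (\<Sum>l<n. \<Sum>m<n. norm (A l m))"
  have "summable (\<lambda>k. S ^ k / fact k)"
    using summable_exp[of S] by (simp add: divide_inverse mult.commute)
  moreover have "norm (mat_pow n A k i j / of_nat (fact k)) \<le> S ^ k / fact k" for k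
    using mat_pow_norm_le[OF assms, of A k i] unfolding S_def
    by (simp add: norm_divide divide_right_mono)
  ultimately have "summable (\<lambda>k. mat_pow n A k i j / of_nat (fact k))"
    by (rule summable_comparison_test'[where N = 0])
  then show ?thesis
    unfolding mat_exp_def by (rule summable_sums)
qed

lemma exp_sums_of_nat_fact: "(\<lambda>k. z ^ k / of_nat (fact k)) sums exp (z :: complex)"
  using exp_converges[of z] by (simp add: scaleR_conv_of_real divide_inverse mult.commute)

lemma mat_vec_add: "mat_vec n A (\<lambda>w. f w + g w) v = mat_vec n A f v + mat_vec n A g v"
  by (simp add: mat_vec_def distrib_left sum.distrib)

lemma mat_vec_scale: "mat_vec n A (\<lambda>w. c * f w) v = c * mat_vec n A f v"
  by (simp add: mat_vec_def sum_distrib_left ac_simps)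

lemma mat_pow_right_eigen:
  assumes "\<forall>v<n. mat_vec n M f v = \<mu> * f v" "v < n"
  shows "mat_vec n (mat_pow n M k) f v = \<mu> ^ k * f v"
  using assms(2)
proof (induction k arbitrary: v)
  case 0
  then show ?case by (simp add: mat_vec_def if_distrib[where f = "\<lambda>x. x * _"] cong: if_cong)
next
  case (Suc k)
  have "mat_vec n (mat_pow n M (Suc k)) f v = (\<Sum>l<n. mat_pow n M k v l * mat_vec n M f l)"
    unfolding mat_vec_def mat_pow.simps mat_mult_def sum_distrib_left sum_distrib_right
    by (subst sum.swap) (simp add: mult.assoc)
  also have "\<dots> = \<mu> * mat_vec n (mat_pow n M k) f v"
    using assms(1) by (simp add: mat_vec_def sum_distrib_left algebra_simps)
  finally show ?case using Suc by simp
qed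

lemma mat_exp_right_eigen:
  assumes "\<forall>v<n. mat_vec n M f v = \<mu> * f v" "v < n"
  shows "mat_vec n (mat_exp n M) f v = exp \<mu> * f v"
proof -
  have "(\<lambda>k. \<Sum>w<n. mat_pow n M k v w / of_nat (fact k) * f w) sums mat_vec n (mat_exp n M) f v"
    unfolding mat_vec_def by (intro sums_sum sums_mult2 mat_exp_sums) auto
  moreover have "(\<Sum>w<n. mat_pow n M k v w / of_nat (fact k) * f w) = \<mu> ^ k / of_nat (fact k) * f v" for k
    using mat_pow_right_eigen[OF assms, of k] by (simp add: mat_vec_def sum_divide_distrib[symmetric])
  ultimately show ?thesis
    using sums_mult2[OF exp_sums_of_nat_fact, of \<mu> "f v"] sums_unique2 by simp
qed

lemma mat_pow_left_eigen:
  assumes "\<forall>w<n. (\<Sum>v<n. \<psi> v * M v w) = \<mu> * \<psi> w" "w < n"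
  shows "(\<Sum>v<n. \<psi> v * mat_pow n M k v w) = \<mu> ^ k * \<psi> w"
  using assms(2)
proof (induction k arbitrary: w)
  case 0
  then show ?case by (simp add: if_distrib[where f = "\<lambda>x. _ * x"] cong: if_cong)
next
  case (Suc k)
  have "(\<Sum>v<n. \<psi> v * mat_pow n M (Suc k) v w) = (\<Sum>l<n. (\<Sum>v<n. \<psi> v * mat_pow n M k v l) * M l w)"
    unfolding mat_pow.simps mat_mult_def sum_distrib_left sum_distrib_right
    by (subst sum.swap) (simp add: mult.assoc)
  also have "\<dots> = \<mu> ^ k * (\<Sum>l<n. \<psi> l * M l w)"
    using Suc.IH by (simp add: sum_distrib_left mult.assoc)
  also have "\<dots> = \<mu> ^ Suc k * \<psi> w"
    using Suc.prems assms(1) by simp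
  finally show ?case .
qed

lemma mat_exp_left_eigen:
  assumes "\<forall>w<n. (\<Sum>v<n. \<psi> v * M v w) = \<mu> * \<psi> w" "w < n"
  shows "(\<Sum>v<n. \<psi> v * mat_exp n M v w) = exp \<mu> * \<psi> w"
proof -
  have "(\<lambda>k. \<Sum>v<n. \<psi> v * (mat_pow n M k v w / of_nat (fact k))) sums (\<Sum>v<n. \<psi> v * mat_exp n M v w)"
    using assms(2) by (intro sums_sum sums_mult mat_exp_sums)
  moreover have "(\<Sum>v<n. \<psi> v * (mat_pow n M k v w / of_nat (fact k))) = \<mu> ^ k / of_nat (fact k) * \<psi> w" for k
    using mat_pow_left_eigen[OF assms, of k] by (simp add: sum_divide_distrib[symmetric])
  ultimately show ?thesis
    using sums_mult2[OF exp_sums_of_nat_fact, of \<mu> "\<psi> w"] sums_unique2 by simp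
qed

lemma left_eigen_mat_vec_mat_exp:
  assumes "\<forall>w<n. (\<Sum>v<n. \<psi> v * M v w) = \<mu> * \<psi> w"
  shows "(\<Sum>v<n. \<psi> v * mat_vec n (mat_exp n M) x v) = exp \<mu> * (\<Sum>w<n. \<psi> w * x w)"
proof -
  have "(\<Sum>v<n. \<psi> v * mat_vec n (mat_exp n M) x v) = (\<Sum>w<n. (\<Sum>v<n. \<psi> v * mat_exp n M v w) * x w)"
    unfolding mat_vec_def sum_distrib_left sum_distrib_right
    by (subst sum.swap) (simp add: mult.assoc)
  also have "\<dots> = exp \<mu> * (\<Sum>w<n. \<psi> w * x w)"
    using mat_exp_left_eigen[OF assms] by (simp add: sum_distrib_left mult.assoc)
  finally show ?thesis .
qed

section \<open>The cycle and its signless Laplacian\<close>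

lemma power_mod_eq_power:
  fixes x :: "'a :: monoid_mult"
  assumes "x ^ n = 1"
  shows "x ^ (k mod n) = x ^ k"
proof -
  have "x ^ k = (x ^ n) ^ (k div n) * x ^ (k mod n)"
    by (metis div_mult_mod_eq power_add power_mult mult.commute)
  then show ?thesis using assms by simp
qed

lemma cycle_adj_commute: "cycle_adj n u v \<longleftrightarrow> cycle_adj n v u"
  unfolding cycle_adj_def by auto

lemma cycle_succ_iff_pred:
  fixes v w n :: nat
  assumes "v < n" "w < n"
  shows "w = (v + 1) mod n \<longleftrightarrow> v = (w + n - 1) mod n"
  using assms by (cases "v + 1 = n"; cases "w = 0") (auto simp: mod_if)

lemma cycle_neighbours:
  assumes "w < n"
  shows "{v. v < n \<and> cycle_adj n v w} = {(w + 1) mod n, (w + n - 1) mod n}"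
  using assms cycle_succ_iff_pred[of _ n w] unfolding cycle_adj_def by auto

lemma cycle_neighbours_distinct:
  fixes w n :: nat
  assumes "n \<ge> 3"
  shows "(w + 1) mod n \<noteq> (w + n - 1) mod n"
proof
  assume "(w + 1) mod n = (w + n - 1) mod n"
  then have "n dvd (w + n - 1) - (w + 1)"
    using assms by (subst mod_eq_dvd_iff_nat[symmetric]) auto
  moreover have "(w + n - 1) - (w + 1) = n - 2" using assms by simp
  ultimately show False
    using assms by (auto dest: dvd_imp_le)
qed

lemma degree_cycle:
  assumes "n \<ge> 3" "w < n"
  shows "degree n (cycle_adj n) w = 2"
  using cycle_neighbours[OF assms(2)] cycle_neighbours_distinct[OF assms(1)]
  unfolding degree_def by (simp add: cycle_adj_commute)

lemma signless_laplacian_cycle: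
  assumes "n \<ge> 3" "w < n"
  shows "signless_laplacian n (cycle_adj n) v w =
    (if v = w then 2 else 0) + (if cycle_adj n v w then 1 else 0)"
  using degree_cycle[OF assms] unfolding signless_laplacian_def by simp

lemma root_of_unity_left_eigen_cycle:
  fixes \<zeta> :: complex
  assumes "n \<ge> 3" "\<zeta> ^ n = 1" "w < n"
  shows "(\<Sum>v<n. \<zeta> ^ v * signless_laplacian n (cycle_adj n) v w) = (2 + \<zeta> + \<zeta> ^ (n - 1)) * \<zeta> ^ w"
proof -
  have "(\<Sum>v<n. \<zeta> ^ v * signless_laplacian n (cycle_adj n) v w)
      = (\<Sum>v<n. if v = w then 2 * \<zeta> ^ v else 0) + (\<Sum>v | v < n \<and> cycle_adj n v w. \<zeta> ^ v)"
    using assms(1,3)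
    by (simp add: signless_laplacian_cycle distrib_left sum.distrib sum.inter_filter[symmetric]
        if_distrib[where f = "\<lambda>x. _ * x"] cong: if_cong)
  also have "\<dots> = 2 * \<zeta> ^ w + \<zeta> ^ ((w + 1) mod n) + \<zeta> ^ ((w + n - 1) mod n)"
    using assms(3) cycle_neighbours_distinct[OF assms(1)] by (simp add: cycle_neighbours)
  also have "\<dots> = (2 + \<zeta> + \<zeta> ^ (n - 1)) * \<zeta> ^ w"
    using assms(1) by (simp add: power_mod_eq_power[OF assms(2)] power_add[symmetric] algebra_simps)
  finally show ?thesis .
qed

lemma cycle_edge_cases:
  assumes "cycle_adj n a b"
  obtains u where "u < n" "{a, b} = {u, (u + 1) mod n}"
    "\<And>\<zeta> :: complex. \<zeta> ^ n = 1 \<Longrightarrow> \<zeta> ^ a + \<zeta> ^ b = \<zeta> ^ u * (1 + \<zeta>)"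
proof -
  have succ: "\<zeta> ^ ((u + 1) mod n) = \<zeta> ^ u * \<zeta>" if "\<zeta> ^ n = 1" for \<zeta> :: complex and u
    by (simp add: power_mod_eq_power[OF that])
  from assms have "a < n" "b < n" "b = (a + 1) mod n \<or> a = (b + 1) mod n"
    unfolding cycle_adj_def by auto
  then show thesis
    using that[of a] that[of b] succ by (auto simp: distrib_left insert_commute add.commute)
qed

section \<open>Roots of unity\<close>

definition unit_root :: "nat \<Rightarrow> complex" where
  "unit_root n = cis (2 * pi / n)"

lemma unit_root_pow: "unit_root n ^ k = cis (2 * pi * k / n)"
  by (simp add: unit_root_def DeMoivre mult_ac)

lemma unit_root_pow_n: "n > 0 \<Longrightarrow> unit_root n ^ n = 1"
  by (simp add: unit_root_pow)

lemma unit_root_pow_pow_n: "n > 0 \<Longrightarrow> (unit_root n ^ j) ^ n = 1"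
  by (metis power_mult mult.commute power_one unit_root_pow_n)

lemma two_pi_div_lt_pi:
  fixes n :: nat
  assumes "n \<ge> 3" shows "2 * pi / n < pi"
proof -
  have "2 * pi < pi * n" using assms by simp
  then show ?thesis by (simp add: divide_less_eq)
qed

lemma cos_2pi_div_gt_minus_one:
  fixes n :: nat
  assumes "n \<ge> 3" shows "-1 < cos (2 * pi / n)"
  using cos_monotone_0_pi[of "2 * pi / n" pi] two_pi_div_lt_pi[OF assms] by simp

lemma cos_2pi_div_lt_one:
  fixes n :: nat
  assumes "n \<ge> 3" shows "cos (2 * pi / n) < 1"
  using cos_monotone_0_pi[of 0 "2 * pi / n"] two_pi_div_lt_pi[OF assms] assms by simp

lemma cos_2pi_div_eq_0_imp_eq_4:
  fixes n :: nat
  assumes "n \<ge> 3" "cos (2 * pi / n) = 0"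
  shows "n = 4"
proof -
  have "2 * pi / n = pi / 2"
    using cos_inj_pi[of "2 * pi / n" "pi / 2"] assms two_pi_div_lt_pi[OF assms(1)] by simp
  then have "real n = 4"
    using assms(1) by (simp add: divide_eq_eq)
  then show ?thesis by simp
qed

lemma cos_2pi_div_eq_iff:
  fixes d e n :: nat
  assumes "d < n" "e < n"
  shows "cos (2 * pi * d / n) = cos (2 * pi * e / n) \<longleftrightarrow> d = e \<or> d + e = n"
proof -
  have fold: "cos (2 * pi * k / n) = cos (2 * pi * min k (n - k) / n)
      \<and> 0 \<le> 2 * pi * min k (n - k) / n \<and> 2 * pi * min k (n - k) / n \<le> pi" if "k < n" for k
  proof -
    have "2 * pi * real (n - k) / n = 2 * pi - 2 * pi * k / n"
      using that by (simp add: of_nat_diff field_simps)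
    then have "cos (2 * pi * real (n - k) / n) = cos (2 * pi * k / n)" by simp
    moreover have "2 * real (min k (n - k)) \<le> n" by linarith
    then have "2 * pi * min k (n - k) / n \<le> pi" using that by (simp add: field_simps)
    ultimately show ?thesis by (simp add: min_def)
  qed
  have "cos (2 * pi * d / n) = cos (2 * pi * e / n) \<longleftrightarrow>
      2 * pi * min d (n - d) / n = 2 * pi * min e (n - e) / n"
    using fold[OF assms(1)] fold[OF assms(2)] cos_inj_pi by metis
  also have "\<dots> \<longleftrightarrow> min d (n - d) = min e (n - e)"
    using assms by (simp add: field_simps)
  also have "\<dots> \<longleftrightarrow> d = e \<or> d + e = n"
    using assms by linarith
  finally show ?thesis .
qed

lemma inj_on_unit_root_pow: "inj_on (\<lambda>k. unit_root n ^ k) {..<n}"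
proof (rule linorder_inj_onI')
  fix a c assume ac: "c \<in> {..<n}" "a < c"
  show "unit_root n ^ a \<noteq> unit_root n ^ c"
  proof
    assume eq: "unit_root n ^ a = unit_root n ^ c"
    have "unit_root n ^ a * unit_root n ^ (c - a) = unit_root n ^ c"
      using ac by (simp flip: power_add)
    then have "unit_root n ^ (c - a) = 1" using eq by (simp add: unit_root_def)
    then have "cos (2 * pi * (c - a) / n) = cos (2 * pi * real 0 / n)"
      by (metis cis.sel(1) one_complex.sel(1) unit_root_pow power_0)
    then have "c - a = 0 \<or> c - a + 0 = n"
      using ac by (subst (asm) cos_2pi_div_eq_iff) auto
    then show False using ac by auto
  qed
qed

lemma cmod_one_add_cis_squared: "cmod (1 + cis x) ^ 2 = 2 + 2 * cos x"
proof -
  have "cmod (1 + cis x) ^ 2 = (1 + cos x) ^ 2 + sin x ^ 2" by (simp add: cmod_power2)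
  then show ?thesis
    using sin_cos_squared_add[of x] by (simp add: power2_eq_square algebra_simps)
qed

lemma cycle_adj_iff_norm_unit_root_pow_add:
  assumes "n \<ge> 3" "x < n" "y < n" "x \<noteq> y"
  shows "cycle_adj n x y \<longleftrightarrow> cmod (unit_root n ^ x + unit_root n ^ y) = cmod (1 + unit_root n)"
  using assms
proof (induction x y rule: linorder_wlog)
  case (le x y)
  define d where "d = y - x"
  have d: "1 \<le> d" "d < n" "y = x + d" using le unfolding d_def by auto
  have "cmod (unit_root n ^ x + unit_root n ^ y) = cmod (unit_root n ^ x) * cmod (1 + unit_root n ^ d)"
    by (simp add: d(3) power_add distrib_left flip: norm_mult)
  also have "\<dots> = cmod (1 + unit_root n ^ d)" by (simp add: unit_root_pow)
  finally have "cmod (unit_root n ^ x + unit_root n ^ y) = cmod (1 + unit_root n) \<longleftrightarrow>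
      cmod (1 + unit_root n ^ d) ^ 2 = cmod (1 + unit_root n ^ 1) ^ 2"
    by (simp add: power2_eq_iff_nonneg)
  also have "\<dots> \<longleftrightarrow> cos (2 * pi * d / n) = cos (2 * pi * real 1 / n)"
    by (simp only: unit_root_pow cmod_one_add_cis_squared) simp
  also have "\<dots> \<longleftrightarrow> d = 1 \<or> d + 1 = n"
    using cos_2pi_div_eq_iff[of d n 1] d le by simp
  also have "\<dots> \<longleftrightarrow> cycle_adj n x y"
    using d le unfolding cycle_adj_def by (auto simp: mod_if)
  finally show ?case by simp
next
  case (sym x y)
  then show ?case by (simp add: cycle_adj_commute add.commute)
qed

section \<open>Rational values of the cosine\<close>

fun lucas_V :: "int \<Rightarrow> int \<Rightarrow> nat \<Rightarrow> int" where
  "lucas_V P Q 0 = 2"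
| "lucas_V P Q (Suc 0) = P"
| "lucas_V P Q (Suc (Suc k)) = P * lucas_V P Q (Suc k) - Q * lucas_V P Q k"

lemma lucas_V_cos:
  fixes x :: real
  assumes "of_int P = of_int d * (2 * cos x)"
  shows "of_int (lucas_V P (d ^ 2) k) = of_int d ^ k * (2 * cos (real k * x))"
  using assms
proof (induction P "d ^ 2" k rule: lucas_V.induct)
  case (3 P k)
  have "cos (Suc (Suc k) * x) = cos (Suc k * x + x)" "cos (k * x) = cos (Suc k * x - x)"
    by (simp_all add: algebra_simps)
  then have "2 * cos x * cos (Suc k * x) = cos (k * x) + cos (Suc (Suc k) * x)"
    by (simp add: cos_add cos_diff)
  then have "of_int d ^ Suc (Suc k) * (2 * cos (Suc (Suc k) * x))
      = of_int d * (2 * cos x) * (of_int d ^ Suc k * (2 * cos (Suc k * x)))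
        - of_int d ^ 2 * (of_int d ^ k * (2 * cos (k * x)))"
    by (simp add: algebra_simps power2_eq_square)
  then show ?case
    by (simp only: lucas_V.simps of_int_diff of_int_mult of_int_power 3)
qed simp_all

lemma lucas_V_cong: "k > 0 \<Longrightarrow> Q dvd lucas_V P Q k - P ^ k"
proof (induction P Q k rule: lucas_V.induct)
  case (3 P Q k)
  have "lucas_V P Q (Suc (Suc k)) - P ^ Suc (Suc k)
      = P * (lucas_V P Q (Suc k) - P ^ Suc k) - Q * lucas_V P Q k"
    by (simp add: algebra_simps)
  also have "Q dvd \<dots>"
    using "3.IH"(1) by simp
  finally show ?case .
qed simp_all

lemma two_cos_rational_imp_integer:
  fixes x :: real and n :: nat
  assumes "n > 0" "cos (n * x) = 1" "2 * cos x \<in> \<rat>"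
  shows "2 * cos x \<in> \<int>"
proof -
  obtain p d :: int where d: "d > 0" "coprime p d" and pd: "2 * cos x = of_int p / of_int d"
    using Rats_cases'[OF assms(3)] by metis
  have "of_int (lucas_V p (d ^ 2) n) = (of_int (2 * d ^ n) :: real)"
    using lucas_V_cos[of p d x n] pd d assms(2) by simp
  then have V: "lucas_V p (d ^ 2) n = 2 * d ^ n"
    by (simp only: of_int_eq_iff)
  \<comment> \<open>d divides both V_n = 2 d^n and V_n - p^n, hence p^n\<close>
  have "d dvd lucas_V p (d ^ 2) n"
    using V assms(1) by simp
  moreover have "d dvd lucas_V p (d ^ 2) n - p ^ n"
    using lucas_V_cong[OF assms(1), of "d ^ 2" p] by (simp add: power2_eq_square dvd_mult_left)
  ultimately have "d dvd lucas_V p (d ^ 2) n - (lucas_V p (d ^ 2) n - p ^ n)"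
    by (rule dvd_diff)
  then have "d dvd p ^ n" by simp
  moreover have "coprime (p ^ n) d" using d by simp
  ultimately have "\<bar>d\<bar> = 1"
    using coprime_common_divisor_int[of "p ^ n" d d] by simp
  with d have "d = 1" by simp
  then show ?thesis using pd by simp
qed

lemma two_cos_2pi_div_rational:
  fixes n :: nat
  assumes "n \<ge> 3" "n \<noteq> 4" "2 * cos (2 * pi / n) \<in> \<rat>"
  shows "2 * cos (2 * pi / n) \<in> {-1, 1}"
proof -
  obtain z :: int where z: "2 * cos (2 * pi / n) = of_int z"
    using two_cos_rational_imp_integer[of n "2 * pi / n"] assms by (auto elim: Ints_cases)
  moreover have "cos (2 * pi / n) \<noteq> 0" "-1 < cos (2 * pi / n)" "cos (2 * pi / n) < 1"
    using cos_2pi_div_eq_0_imp_eq_4 cos_2pi_div_gt_minus_one cos_2pi_div_lt_one assms(1,2) by auto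
  ultimately have "z = 1 \<or> z = -1" by linarith
  with z show ?thesis by auto
qed

lemma cis_eq_minus_one_ratio:
  assumes "cis \<theta> = -1" "cis (r * \<theta>) = 1"
  obtains k m :: int where "r * of_int (2 * m + 1) = of_int (2 * k)"
proof -
  have "cos (\<theta> + pi) = 1"
    using assms(1) by (simp add: cos_add complex_eq_iff)
  then obtain m :: int where m: "\<theta> + pi = of_int m * 2 * pi"
    using cos_one_2pi_int by blast
  have "cos (r * \<theta>) = 1"
    using assms(2) by (simp add: complex_eq_iff)
  then obtain k :: int where k: "r * \<theta> = of_int k * 2 * pi"
    using cos_one_2pi_int by blast
  have "\<theta> = of_int (2 * (m - 1) + 1) * pi"
    using m by (simp add: algebra_simps)
  then have "r * of_int (2 * (m - 1) + 1) * pi = of_int (2 * k) * pi"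
    using k by (simp add: mult.assoc)
  then show thesis
    using that[of "m - 1" k] by simp
qed

section \<open>Plus state transfer on the cycle\<close>

definition cycle_eigenvalue :: "nat \<Rightarrow> nat \<Rightarrow> real" where
  "cycle_eigenvalue n j = 2 + 2 * cos (2 * pi * j / n)"

lemma unit_root_character_left_eigen:
  assumes "n \<ge> 3" "w < n"
  shows "(\<Sum>v<n. (unit_root n ^ j) ^ v * signless_laplacian n (cycle_adj n) v w)
    = cycle_eigenvalue n j * (unit_root n ^ j) ^ w"
proof -
  define \<zeta> where "\<zeta> = unit_root n ^ j"
  have \<zeta>n: "\<zeta> ^ n = 1"
    using unit_root_pow_pow_n assms(1) unfolding \<zeta>_def by simp
  then have "\<zeta> * \<zeta> ^ (n - 1) = 1"
    using assms(1) by (simp flip: power_Suc)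
  then have "\<zeta> ^ (n - 1) = cis (- (2 * pi * j / n))"
    unfolding \<zeta>_def unit_root_pow using inverse_unique by fastforce
  then have "2 + \<zeta> + \<zeta> ^ (n - 1) = cycle_eigenvalue n j"
    by (simp add: \<zeta>_def unit_root_pow cycle_eigenvalue_def complex_eq_iff)
  then show ?thesis
    using root_of_unity_left_eigen_cycle[OF assms(1) \<zeta>n assms(2)] unfolding \<zeta>_def by simp
qed

lemma sum_mult_std_basis: "a < n \<Longrightarrow> (\<Sum>w<n. f w * std_basis a w) = f a"
  by (simp add: std_basis_def if_distrib[where f = "\<lambda>x. _ * x"] cong: if_cong)

lemma plus_PST_cycle_character:
  assumes "n \<ge> 3" "a < n" "b < n" "c < n" "d < n" "plus_PST n (cycle_adj n) a b c d"
  obtains t \<gamma> where "cmod \<gamma> = 1"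
    "\<And>j. cis (t * cycle_eigenvalue n j) * ((unit_root n ^ j) ^ a + (unit_root n ^ j) ^ b)
      = \<gamma> * ((unit_root n ^ j) ^ c + (unit_root n ^ j) ^ d)"
proof -
  obtain t \<gamma> where \<gamma>: "cmod \<gamma> = 1" and U:
    "\<forall>v<n. mat_vec n (mat_exp n (\<lambda>i j. \<i> * of_real t * signless_laplacian n (cycle_adj n) i j))
       (\<lambda>w. std_basis a w + std_basis b w) v = \<gamma> * (std_basis c v + std_basis d v)"
    using assms(6) unfolding plus_PST_def by blast
  have "cis (t * cycle_eigenvalue n j) * ((unit_root n ^ j) ^ a + (unit_root n ^ j) ^ b)
      = \<gamma> * ((unit_root n ^ j) ^ c + (unit_root n ^ j) ^ d)" for j
  proof -
    define \<psi> where "\<psi> v = (unit_root n ^ j) ^ v" for v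
    define M where "M = (\<lambda>i k. \<i> * of_real t * signless_laplacian n (cycle_adj n) i k)"
    have "(\<Sum>v<n. \<psi> v * M v w) = \<i> * of_real t * (\<Sum>v<n. \<psi> v * signless_laplacian n (cycle_adj n) v w)"
      for w by (simp add: M_def sum_distrib_left ac_simps)
    then have "\<forall>w<n. (\<Sum>v<n. \<psi> v * M v w) = \<i> * of_real (t * cycle_eigenvalue n j) * \<psi> w"
      using unit_root_character_left_eigen[OF assms(1)] by (simp add: \<psi>_def)
    then have "(\<Sum>v<n. \<psi> v * mat_vec n (mat_exp n M) (\<lambda>w. std_basis a w + std_basis b w) v)
        = cis (t * cycle_eigenvalue n j) * (\<Sum>w<n. \<psi> w * (std_basis a w + std_basis b w))"
      by (simp add: left_eigen_mat_vec_mat_exp cis_conv_exp)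
    moreover have "(\<Sum>v<n. \<psi> v * mat_vec n (mat_exp n M) (\<lambda>w. std_basis a w + std_basis b w) v)
        = \<gamma> * (\<Sum>v<n. \<psi> v * (std_basis c v + std_basis d v))"
      using U unfolding M_def sum_distrib_left by (intro sum.cong) auto
    ultimately show ?thesis
      using assms(2-5) by (simp add: \<psi>_def distrib_left sum.distrib sum_mult_std_basis)
  qed
  with \<gamma> show ?thesis using that by blast
qed

lemma plus_PST_cycle_edges:
  assumes "n \<ge> 3" "a < n" "b < n" "c < n" "d < n" "a \<noteq> b" "c \<noteq> d"
    and "cycle_adj n a b \<or> cycle_adj n c d" "plus_PST n (cycle_adj n) a b c d"
  shows "cycle_adj n a b \<and> cycle_adj n c d"
proof -
  obtain t \<gamma> where "cmod \<gamma> = 1" and H: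
    "\<And>j. cis (t * cycle_eigenvalue n j) * ((unit_root n ^ j) ^ a + (unit_root n ^ j) ^ b)
      = \<gamma> * ((unit_root n ^ j) ^ c + (unit_root n ^ j) ^ d)"
    using plus_PST_cycle_character[OF assms(1-5,9)] by blast
  then have "cmod (unit_root n ^ a + unit_root n ^ b) = cmod (unit_root n ^ c + unit_root n ^ d)"
    using arg_cong[OF H[of 1], of cmod] by (simp add: norm_mult)
  then show ?thesis
    using assms(8) cycle_adj_iff_norm_unit_root_pow_add assms(1-7) by metis
qed

lemma edge_transfer_antipodal:
  assumes "n \<ge> 3" "u < n" "u' < n" "u \<noteq> u'" "\<gamma> \<noteq> 0"
    and H: "\<And>j. cis (t * cycle_eigenvalue n j) * ((unit_root n ^ j) ^ u * (1 + unit_root n ^ j))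
      = \<gamma> * ((unit_root n ^ j) ^ u' * (1 + unit_root n ^ j))"
  shows "unit_root n ^ u' = - (unit_root n ^ u)"
proof -
  define E where "E = cis (t * cycle_eigenvalue n 1)"
  have inv: "unit_root n ^ (n - 1) = inverse (unit_root n)"
    using unit_root_pow_n[of n] assms(1)
    by (intro inverse_unique[symmetric]) (simp flip: power_Suc)
  have "Re (1 + unit_root n) > 0"
    using cos_2pi_div_gt_minus_one[OF assms(1)] by (simp add: unit_root_def)
  then have nz: "1 + unit_root n \<noteq> 0" "1 + inverse (unit_root n) \<noteq> 0"
    by (auto simp: unit_root_def complex_eq_iff)
  \<comment> \<open>the equation for j = n - 1 is the one for j = 1 with every power of the root inverted\<close>
  have "cycle_eigenvalue n (n - 1) = cycle_eigenvalue n 1"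
    using assms(1) cos_2pi_div_eq_iff[of "n - 1" n 1] by (simp add: cycle_eigenvalue_def)
  then have "E * inverse (unit_root n ^ u) = \<gamma> * inverse (unit_root n ^ u')"
    using H[of "n - 1", unfolded inv power_inverse] nz(2) by (simp add: E_def)
  then have e2: "E * unit_root n ^ u' = \<gamma> * unit_root n ^ u"
    by (simp add: field_simps unit_root_def)
  have e1: "E * unit_root n ^ u = \<gamma> * unit_root n ^ u'"
    using H[of 1] nz(1) by (simp add: E_def)
  have "\<gamma> * (unit_root n ^ u') ^ 2 = (E * unit_root n ^ u) * unit_root n ^ u'"
    by (simp add: e1 power2_eq_square)
  also have "\<dots> = \<gamma> * (unit_root n ^ u) ^ 2"
    by (simp add: mult.left_commute[of _ "unit_root n ^ u"] e2 power2_eq_square)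
  finally have "\<gamma> * (unit_root n ^ u') ^ 2 = \<gamma> * (unit_root n ^ u) ^ 2" .
  then have "(unit_root n ^ u') ^ 2 = (unit_root n ^ u) ^ 2"
    using assms(5) by simp
  moreover have "unit_root n ^ u' \<noteq> unit_root n ^ u"
    using inj_on_unit_root_pow[of n] assms(2-4) unfolding inj_on_def by blast
  ultimately show ?thesis by (simp add: power2_eq_iff)
qed

lemma cycle_eigenvalue_phases_not_alternating:
  assumes "n \<ge> 3" "n \<noteq> 4"
    and "cis (t * cycle_eigenvalue n 1) = - cis (t * cycle_eigenvalue n 0)"
    and "cis (t * cycle_eigenvalue n 2) = cis (t * cycle_eigenvalue n 0)"
  shows False
proof -
  define c where "c = cos (2 * pi / n)"
  have \<lambda>: "cycle_eigenvalue n 0 = 4" "cycle_eigenvalue n 1 = 2 + 2 * c"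
      "cycle_eigenvalue n 2 = 4 - (2 - 2 * c) * (2 + 2 * c)"
    using cos_double_cos[of "2 * pi / n"]
    by (simp_all add: cycle_eigenvalue_def c_def algebra_simps power2_eq_square)
  have "t * (2 - 2 * c) = t * cycle_eigenvalue n 0 - t * cycle_eigenvalue n 1"
    "(2 + 2 * c) * (t * (2 - 2 * c)) = t * cycle_eigenvalue n 0 - t * cycle_eigenvalue n 2"
    by (simp_all only: \<lambda>) (simp_all add: algebra_simps)
  then have "cis (t * (2 - 2 * c)) = -1" "cis ((2 + 2 * c) * (t * (2 - 2 * c))) = 1"
    using assms(3,4) by (simp_all add: cis_divide[symmetric])
  then obtain k m :: int where km: "(2 + 2 * c) * of_int (2 * m + 1) = of_int (2 * k)"
    by (rule cis_eq_minus_one_ratio)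
  moreover have "real_of_int (2 * m + 1) \<noteq> 0"
    unfolding of_int_eq_0_iff by presburger
  ultimately have "2 + 2 * c = of_int (2 * k) / of_int (2 * m + 1)"
    by (subst nonzero_eq_divide_eq)
  then have "2 * c \<in> \<rat>"
    by (metis Rats_diff Rats_divide Rats_of_int Rats_number_of add_diff_cancel_left')
  then have "2 * c \<in> {-1, 1}"
    using two_cos_2pi_div_rational assms(1,2) unfolding c_def by blast
  then have "2 + 2 * c = of_int 1 \<or> 2 + 2 * c = of_int 3"
    by auto
  then obtain z :: int where z: "2 + 2 * c = of_int z" "z = 1 \<or> z = 3"
    by blast
  have "real_of_int (z * (2 * m + 1)) = real_of_int (2 * k)"
    using km unfolding z(1) of_int_mult .
  then have "z * (2 * m + 1) = 2 * k"
    by (simp only: of_int_eq_iff)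
  with z(2) show False by presburger
qed

lemma no_character_transfer_between_edges:
  assumes "n \<ge> 3" "n \<noteq> 4" "u < n" "u' < n" "u \<noteq> u'" "\<gamma> \<noteq> 0"
    and H: "\<And>j. cis (t * cycle_eigenvalue n j) * ((unit_root n ^ j) ^ u * (1 + unit_root n ^ j))
      = \<gamma> * ((unit_root n ^ j) ^ u' * (1 + unit_root n ^ j))"
  shows False
proof -
  have antipodal: "unit_root n ^ u' = - (unit_root n ^ u)"
    by (rule edge_transfer_antipodal[OF assms(1,3-6) H])
  have phase: "cis (t * cycle_eigenvalue n j) = (-1) ^ j * \<gamma>" if "1 + unit_root n ^ j \<noteq> 0" for j
  proof -
    have "(unit_root n ^ j) ^ u' = (-1) ^ j * (unit_root n ^ j) ^ u"
      by (metis antipodal power_minus power_mult mult.commute)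
    moreover have "unit_root n \<noteq> 0" by (simp add: unit_root_def)
    ultimately show ?thesis
      using H[of j] that by (simp add: ac_simps)
  qed
  define c where "c = cos (2 * pi / n)"
  have "c \<noteq> 0" "-1 < c"
    using cos_2pi_div_eq_0_imp_eq_4 cos_2pi_div_gt_minus_one assms(1,2) unfolding c_def by auto
  moreover have "Re (1 + unit_root n ^ 1) = 1 + c"
    by (simp add: unit_root_def c_def)
  moreover have "Re (1 + unit_root n ^ 2) = 2 * c ^ 2"
    using cos_double_cos[of "2 * pi / n"] by (simp add: unit_root_pow c_def mult_ac)
  ultimately have "0 < Re (1 + unit_root n ^ 1)" "0 < Re (1 + unit_root n ^ 2)"
    by simp_all
  then have "1 + unit_root n ^ 1 \<noteq> 0" "1 + unit_root n ^ 2 \<noteq> 0"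
    by (metis less_irrefl zero_complex.sel(1))+
  then have "cis (t * cycle_eigenvalue n 1) = - cis (t * cycle_eigenvalue n 0)"
    "cis (t * cycle_eigenvalue n 2) = cis (t * cycle_eigenvalue n 0)"
    using phase[of 0] phase[of 1] phase[of 2] by simp_all
  then show False
    using cycle_eigenvalue_phases_not_alternating assms(1,2) by blast
qed

lemma no_plus_PST_cycle_between_edges:
  assumes "n \<ge> 3" "n \<noteq> 4" "cycle_adj n a b" "cycle_adj n c d" "{a, b} \<noteq> {c, d}"
  shows "\<not> plus_PST n (cycle_adj n) a b c d"
proof
  assume pst: "plus_PST n (cycle_adj n) a b c d"
  obtain u where u: "u < n" "{a, b} = {u, (u + 1) mod n}"
    "\<And>\<zeta> :: complex. \<zeta> ^ n = 1 \<Longrightarrow> \<zeta> ^ a + \<zeta> ^ b = \<zeta> ^ u * (1 + \<zeta>)"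
    using cycle_edge_cases[OF assms(3)] by blast
  obtain u' where u': "u' < n" "{c, d} = {u', (u' + 1) mod n}"
    "\<And>\<zeta> :: complex. \<zeta> ^ n = 1 \<Longrightarrow> \<zeta> ^ c + \<zeta> ^ d = \<zeta> ^ u' * (1 + \<zeta>)"
    using cycle_edge_cases[OF assms(4)] by blast
  have "u \<noteq> u'" using u(2) u'(2) assms(5) by auto
  have "a < n" "b < n" "c < n" "d < n"
    using assms(3,4) unfolding cycle_adj_def by auto
  then obtain t \<gamma> where \<gamma>: "cmod \<gamma> = 1" and H:
    "\<And>j. cis (t * cycle_eigenvalue n j) * ((unit_root n ^ j) ^ a + (unit_root n ^ j) ^ b)
      = \<gamma> * ((unit_root n ^ j) ^ c + (unit_root n ^ j) ^ d)"
    using plus_PST_cycle_character[OF assms(1) _ _ _ _ pst] by blast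
  have "cis (t * cycle_eigenvalue n j) * ((unit_root n ^ j) ^ u * (1 + unit_root n ^ j))
      = \<gamma> * ((unit_root n ^ j) ^ u' * (1 + unit_root n ^ j))" for j
    using H[of j] u(3) u'(3) unit_root_pow_pow_n[of n j] assms(1) by simp
  moreover have "\<gamma> \<noteq> 0" using \<gamma> by auto
  ultimately show False
    using no_character_transfer_between_edges assms(1,2) u(1) u'(1) \<open>u \<noteq> u'\<close> by blast
qed

lemma plus_PST_cycle4: "plus_PST 4 (cycle_adj 4) 0 1 2 3"
proof -
  define M where "M = (\<lambda>i j. \<i> * of_real (pi / 2) * signless_laplacian 4 (cycle_adj 4) i j)"
  define g :: "nat \<Rightarrow> complex" where "g w = (if w < 2 then 1 else -1)" for w
  have L: "signless_laplacian 4 (cycle_adj 4) v w =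
      (if v = w then 2 else 0) + (if cycle_adj 4 v w then 1 else 0)" if "w < 4" for v w
    using signless_laplacian_cycle[of 4 w v] that by simp
  have sum4: "(\<Sum>w<4. f w) = f 0 + f 1 + f 2 + f 3" for f :: "nat \<Rightarrow> complex"
    by (simp add: eval_nat_numeral)
  have all4: "(\<forall>v<4. P v) \<longleftrightarrow> P 0 \<and> P 1 \<and> P 2 \<and> P (3 :: nat)" for P
    by (auto simp: eval_nat_numeral less_Suc_eq)
  have eig1: "\<forall>v<4. mat_vec 4 M (\<lambda>_. 1) v = (2 * pi * \<i>) * 1"
    and eig2: "\<forall>v<4. mat_vec 4 M g v = (pi * \<i>) * g v"
    unfolding all4 mat_vec_def sum4 M_def g_def by (simp_all add: L cycle_adj_def algebra_simps)
  have U: "mat_vec 4 (mat_exp 4 M) (\<lambda>_. 1) v = 1" "mat_vec 4 (mat_exp 4 M) g v = - g v"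
    if "v < 4" for v
    using mat_exp_right_eigen[OF eig1 that] mat_exp_right_eigen[OF eig2 that]
    unfolding exp_two_pi_i exp_pi_i by simp_all
  have e01: "(\<lambda>w. std_basis 0 w + std_basis 1 w) = (\<lambda>w. 1 / 2 * (1 + g w))"
    by (rule ext) (simp add: std_basis_def g_def)
  have "mat_vec 4 (mat_exp 4 M) (\<lambda>w. std_basis 0 w + std_basis 1 w) v
      = 1 * (std_basis 2 v + std_basis 3 v)" if "v < 4" for v
  proof -
    have "mat_vec 4 (mat_exp 4 M) (\<lambda>w. std_basis 0 w + std_basis 1 w) v
        = 1 / 2 * (mat_vec 4 (mat_exp 4 M) (\<lambda>_. 1) v + mat_vec 4 (mat_exp 4 M) g v)"
      by (simp only: e01 mat_vec_scale mat_vec_add)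
    also have "\<dots> = 1 * (std_basis 2 v + std_basis 3 v)"
      using that by (cases "v < 2") (auto simp: U g_def std_basis_def)
    finally show ?thesis .
  qed
  then show ?thesis
    unfolding plus_PST_def M_def by (intro exI[of _ "pi / 2"] exI[of _ 1]) simp
qed

theorem mainTheorem18:
  fixes n :: nat
  assumes "n \<ge> 3"
  shows "(\<exists>a b c d. a < n \<and> b < n \<and> c < n \<and> d < n \<and> a \<noteq> b \<and> c \<noteq> d \<and>
            {a, b} \<noteq> {c, d} \<and> (cycle_adj n a b \<or> cycle_adj n c d) \<and>
            plus_PST n (cycle_adj n) a b c d)
         \<longleftrightarrow> n = 4"
proof
  assume "\<exists>a b c d. a < n \<and> b < n \<and> c < n \<and> d < n \<and> a \<noteq> b \<and> c \<noteq> d \<and>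
            {a, b} \<noteq> {c, d} \<and> (cycle_adj n a b \<or> cycle_adj n c d) \<and>
            plus_PST n (cycle_adj n) a b c d"
  then obtain a b c d where abcd: "a < n" "b < n" "c < n" "d < n" "a \<noteq> b" "c \<noteq> d"
    and "{a, b} \<noteq> {c, d}" "cycle_adj n a b \<or> cycle_adj n c d"
    and pst: "plus_PST n (cycle_adj n) a b c d"
    by blast
  moreover have "cycle_adj n a b \<and> cycle_adj n c d"
    by (rule plus_PST_cycle_edges[OF assms abcd \<open>cycle_adj n a b \<or> cycle_adj n c d\<close> pst])
  ultimately show "n = 4"
    using no_plus_PST_cycle_between_edges[OF assms, of a b c d] by blast
next
  assume "n = 4"
  show "\<exists>a b c d. a < n \<and> b < n \<and> c < n \<and> d < n \<and> a \<noteq> b \<and> c \<noteq> d \<and>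
            {a, b} \<noteq> {c, d} \<and> (cycle_adj n a b \<or> cycle_adj n c d) \<and>
            plus_PST n (cycle_adj n) a b c d"
    unfolding \<open>n = 4\<close>
    by (rule exI[of _ 0], rule exI[of _ 1], rule exI[of _ 2], rule exI[of _ 3])
      (use plus_PST_cycle4 in \<open>simp add: cycle_adj_def doubleton_eq_iff\<close>)
qed

end
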